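(* Let $n\ge2$, $A\in\mathbb{R}^{n\times m}$, $B\in\mathbb{R}^{m\times n}$, and let $W$ be a cycle in $G_{A,B}$ with vertex sequence $(S_{i_1},R_{j_1},\dots,S_{i_N},R_{j_N},S_{i_1})$. (i) A cycle $C$ in $G^{[2]}_{A,B}$ is an external lifting of $W$ if and only if there exists $p\notin\{i_1,\dots,i_N\}$ such that $C=(i_1p,\,j_1^p,\,i_2p,\,j_2^p,\dots,i_Np,\,j_N^p,\,i_1p)$. (ii) If $C$ is an internal lifting of $W$, then every S-vertex of $C$ is of the form $ab$ with $a,b\in\{i_1,\dots,i_N\}$.
   Context: DSR graphs: for $A\in\mathbb{R}^{n\times m}$, $B\in\mathbb{R}^{m\times n}$, $G_{A,B}$ is the signed bipartite digraph with S-vertices $S_1,\dots,S_n$ and R-vertices $R_1,\dots,R_m$, an arc $R_j\to S_i$ of sign $\mathrm{sign}(A_{ij})$ iff $A_{ij}\ne0$, an arc $S_i\to R_j$ of sign $\mathrm{sign}(B_{ji})$ iff $B_{ji}\ne0$, with antiparallel arcs of equal sign merged into an undirected edge. Walks traverse edges consistently with orientation (empty walks allowed); a cycle is a nonempty closed walk with no repeated vertex except first$=$last. DSR$^{[2]}$ graph: $\overline{\mathbf L}^A\in\mathbb{R}^{\binom n2\times mn}$ has rows indexed by $(i,j)$, $i<j$, columns by $(k,l)$, $1\le k\le m$, $1\le l\le n$, entries $A_{jk}$ if $l=i$, $-A_{ik}$ if $l=j$, $0$ otherwise; $\underline{\mathbf L}^B\in\mathbb{R}^{mn\times\binom n2}$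 has $(k,l),(i,j)$ entry $B_{kj}$ if $l=i$, $-B_{ki}$ if $l=j$, $0$ otherwise. $G^{[2]}_{A,B}:=G_{\overline{\mathbf L}^A,\underline{\mathbf L}^B}$, with S-vertices $ij=ji$ ($i\ne j$) and R-vertices $k^l$; an edge $(ij,k^l)$ exists only if $l\in\{i,j\}$. The projection $\pi$ sends an edge $(ij,k^j)$ to the edge $(S_i,R_k)$ of $G_{A,B}$. Direct/twisted and $\pi(C)$ for a cycle $C$ of $G^{[2]}_{A,B}$: let $C$ have S-vertex sequence $a_1b_1,\dots,a_{T+1}b_{T+1}=a_1b_1$, and write the segment from $a_rb_r$ to $a_{r+1}b_{r+1}$ as $(a_rb_r,k^l,a_{r+1}b_{r+1})$ with $l$ the common index; its projection is a length-2 walk from $S_x$ to $S_y$, with $x$ the element of $\{a_r,b_r\}$ other than $l$ and $y$ that of $\{a_{r+1},b_{r+1}\}$ other than $l$. Starting from empty walks at $S_{a_1}$ and $S_{b_1}$, for $r=1,\dots,T$ append the projected segment to whichever current walk ends at $S_x$. If the final walks $W',W''$ are both closed, $C$ is direct and $\pi(C)=\{W',W''\}$; otherwise $C$ is twisted and $\pi(C)=W'\sqcup W''$ (the closed walk traversing $W'$ then $W''$). Liftings: a cycle $C$ of $G^{[2]}_{A,B}$ is a lifting of the cycle $W$ of $G_{A,B}$ if it projects to $W$ (up to choice of starting vertex), i.e. either $C$ is twisted and $\pi(C)=W$, in which case $C$ is an internal lifting of $W$; or $C$ is direct with $\pi(C)=\{W',W''\}$ where one of $W',W''$ is empty and the other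 is $W$, in which case $C$ is an external lifting of $W$. *)

theory Defs
  imports Complex_Main
begin

text \<open>Matrices are functions nat => nat => real; indices are 0-based:
  A (n x m) has entries A i k with i < n, k < m; B (m x n) has entries B k i.
  S-vertices of G_{A,B} are indices i < n, R-vertices indices k < m.
  S-vertices of the DSR^[2] graph are pairs (i,j) with i < j < n (the unordered pair ij),
  R-vertices k^l are pairs (k,l) with k < m, l < n.
  A cycle (s_1, r_1, s_2, r_2, ..., s_N, r_N, s_1) in a DSR-type bipartite graph is
  represented by the list [(s_1,r_1), ..., (s_N,r_N)].\<close>

definition LbarA :: "(nat \<Rightarrow> nat \<Rightarrow> real) \<Rightarrow> nat \<times> nat \<Rightarrow> nat \<times> nat \<Rightarrow> real" where
  "LbarA A ij kl = (case ij of (i, j) \<Rightarrow> case kl of (k, l) \<Rightarrow>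
      if l = i then A j k else if l = j then - A i k else 0)"

definition LunderB :: "(nat \<Rightarrow> nat \<Rightarrow> real) \<Rightarrow> nat \<times> nat \<Rightarrow> nat \<times> nat \<Rightarrow> real" where
  "LunderB B kl ij = (case kl of (k, l) \<Rightarrow> case ij of (i, j) \<Rightarrow>
      if l = i then B k j else if l = j then - B k i else 0)"

text \<open>Generic cycle in a DSR-type bipartite digraph: SV/RV are the vertex sets,
  SR s r: an arc (or undirected edge) can be traversed from s to r; RS r s likewise.
  A walk is determined by its vertex sequence since between two vertices there is at
  most one arc/edge usable in a given direction.\<close>
definition is_dsr_cycle ::
  "('s \<Rightarrow> bool) \<Rightarrow> ('r \<Rightarrow> bool) \<Rightarrow> ('s \<Rightarrow> 'r \<Rightarrow> bool) \<Rightarrow> ('r \<Rightarrow> 's \<Rightarrow> bool)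
     \<Rightarrow> ('s \<times> 'r) list \<Rightarrow> bool" where
  "is_dsr_cycle SV RV SR RS c \<longleftrightarrow> c \<noteq> [] \<and> distinct (map fst c) \<and> distinct (map snd c) \<and>
     (\<forall>t < length c. SV (fst (c ! t)) \<and> RV (snd (c ! t)) \<and>
        SR (fst (c ! t)) (snd (c ! t)) \<and>
        RS (snd (c ! t)) (fst (c ! ((t + 1) mod length c))))"

text \<open>Cycles of G_{A,B}: arc S_i -> R_k iff B k i \<noteq> 0, arc R_k -> S_i iff A i k \<noteq> 0.\<close>
definition dsr_cycle :: "nat \<Rightarrow> nat \<Rightarrow> (nat \<Rightarrow> nat \<Rightarrow> real) \<Rightarrow> (nat \<Rightarrow> nat \<Rightarrow> real)
     \<Rightarrow> (nat \<times> nat) list \<Rightarrow> bool" where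
  "dsr_cycle n m A B W = is_dsr_cycle (\<lambda>i. i < n) (\<lambda>k. k < m)
       (\<lambda>i k. B k i \<noteq> 0) (\<lambda>k i. A i k \<noteq> 0) W"

text \<open>Cycles of the DSR^[2] graph G^[2]_{A,B} = G_{LbarA, LunderB}.\<close>
definition dsr2_cycle :: "nat \<Rightarrow> nat \<Rightarrow> (nat \<Rightarrow> nat \<Rightarrow> real) \<Rightarrow> (nat \<Rightarrow> nat \<Rightarrow> real)
     \<Rightarrow> ((nat \<times> nat) \<times> (nat \<times> nat)) list \<Rightarrow> bool" where
  "dsr2_cycle n m A B C = is_dsr_cycle (\<lambda>(i, j). i < j \<and> j < n) (\<lambda>(k, l). k < m \<and> l < n)
       (\<lambda>s r. LunderB B r s \<noteq> 0) (\<lambda>r s. LbarA A s r \<noteq> 0) C"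

text \<open>The S-vertex ij = ji of the DSR^[2] graph, normalised.\<close>
definition spair :: "nat \<Rightarrow> nat \<Rightarrow> nat \<times> nat" where
  "spair i j = (min i j, max i j)"

text \<open>Walks in G_{A,B} from an S-vertex to an S-vertex: (start, steps, end), where each step
  (x,k) is the pair S_x, R_k traversed (followed by the next S-vertex).\<close>
type_synonym walk = "nat \<times> (nat \<times> nat) list \<times> nat"

definition wstart :: "walk \<Rightarrow> nat" where "wstart w = fst w"
definition wsteps :: "walk \<Rightarrow> (nat \<times> nat) list" where "wsteps w = fst (snd w)"
definition wend :: "walk \<Rightarrow> nat" where "wend w = snd (snd w)"
definition wclosed :: "walk \<Rightarrow> bool" where "wclosed w \<longleftrightarrow> wstart w = wend w"

definition wappend :: "walk \<Rightarrow> nat \<Rightarrow> nat \<Rightarrow> nat \<Rightarrow> walk" where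
  "wappend w x k y = (wstart w, wsteps w @ [(x, k)], y)"

definition other :: "nat \<times> nat \<Rightarrow> nat \<Rightarrow> nat" where
  "other s l = (if l = fst s then snd s else fst s)"

definition proj_step :: "walk \<times> walk \<Rightarrow> (nat \<times> nat) \<times> (nat \<times> nat) \<times> (nat \<times> nat) \<Rightarrow> walk \<times> walk" where
  "proj_step ws seg = (case seg of (s, (k, l), s') \<Rightarrow>
      (let x = other s l; y = other s' l in
        if wend (fst ws) = x then (wappend (fst ws) x k y, snd ws)
        else (fst ws, wappend (snd ws) x k y)))"

definition segments :: "((nat \<times> nat) \<times> (nat \<times> nat)) list \<Rightarrow> ((nat \<times> nat) \<times> (nat \<times> nat) \<times> (nat \<times> nat)) list" where
  "segments C = map (\<lambda>t. (fst (C ! t), snd (C ! t), fst (C ! ((t + 1) mod length C)))) [0..<length C]"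

definition proj_walks :: "((nat \<times> nat) \<times> (nat \<times> nat)) list \<Rightarrow> walk \<times> walk" where
  "proj_walks C = (let s = fst (hd C) in
     foldl proj_step ((fst s, [], fst s), (snd s, [], snd s)) (segments C))"

definition is_direct :: "((nat \<times> nat) \<times> (nat \<times> nat)) list \<Rightarrow> bool" where
  "is_direct C \<longleftrightarrow> wclosed (fst (proj_walks C)) \<and> wclosed (snd (proj_walks C))"

text \<open>Equality of closed walks up to choice of starting vertex.\<close>
definition same_cycle :: "'a list \<Rightarrow> 'a list \<Rightarrow> bool" where
  "same_cycle xs ys \<longleftrightarrow> (\<exists>r. xs = rotate r ys)"

definition external_lifting :: "((nat \<times> nat) \<times> (nat \<times> nat)) list \<Rightarrow> (nat \<times> nat) list \<Rightarrow> bool" where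
  "external_lifting C W \<longleftrightarrow> is_direct C \<and>
     ((wsteps (fst (proj_walks C)) = [] \<and> same_cycle (wsteps (snd (proj_walks C))) W) \<or>
      (wsteps (snd (proj_walks C)) = [] \<and> same_cycle (wsteps (fst (proj_walks C))) W))"

text \<open>Twisted case: pi(C) = W' followed by W''.\<close>
definition internal_lifting :: "((nat \<times> nat) \<times> (nat \<times> nat)) list \<Rightarrow> (nat \<times> nat) list \<Rightarrow> bool" where
  "internal_lifting C W \<longleftrightarrow> \<not> is_direct C \<and>
     same_cycle (wsteps (fst (proj_walks C)) @ wsteps (snd (proj_walks C))) W"

end

theory Submission
  imports Defs
begin

text \<open>While C is traversed, the two partial walks of the projection always end at the two
  indices of the current S-vertex ij, and the segment through k^l extends the walk ending at
  the index other than l. So a walk stays empty exactly when the common index l is one and the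
  same p along all of C; then C = (i_1 p, j_1^p, ..., i_N p, j_N^p) and the other walk is
  the whole projection, which gives (i). If C is twisted, l is not constant; and an index l
  that is never the moving index of a segment is kept as common index by the next segment as
  well, hence forever. So in the twisted case every index of every S-vertex of C is the
  moving index of some segment, i.e. an S-vertex of the projection W.\<close>

lemma walk_simps [simp]:
  "wstart (a, b, c) = a" "wsteps (a, b, c) = b" "wend (a, b, c) = c"
  "wstart (wappend w x k y) = wstart w" "wsteps (wappend w x k y) = wsteps w @ [(x, k)]"
  "wend (wappend w x k y) = y"
  by (simp_all add: wstart_def wsteps_def wend_def wappend_def)

lemma other_neq_and_pair:
  assumes "fst s < snd s" "l \<in> {fst s, snd s}"
  shows "other s l \<noteq> l" "{other s l, l} = {fst s, snd s}"
  using assms by (auto simp: other_def)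

lemma other_spair: "i \<noteq> p \<Longrightarrow> other (spair i p) p = i"
  by (auto simp: other_def spair_def min_def max_def)

locale dsr2_cycle_segments =
  fixes n m :: nat and A B :: "nat \<Rightarrow> nat \<Rightarrow> real"
    and C :: "((nat \<times> nat) \<times> (nat \<times> nat)) list"
  assumes cycle: "dsr2_cycle n m A B C"
begin

abbreviation "N \<equiv> length C"

text \<open>The t-th segment of C is (S t, (K t)^(L t), S (t+1)); it projects to the walk
  S_{X t} \<rightarrow> R_{K t} \<rightarrow> S_{Y t} of G_{A,B}.\<close>
definition "S t = fst (C ! t)"
definition "K t = fst (snd (C ! t))"
definition "L t = snd (snd (C ! t))"
definition "X t = other (S t) (L t)"
definition "Y t = other (S ((t + 1) mod N)) (L t)"

definition proj_steps :: "(nat \<times> nat) list" where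
  "proj_steps = map (\<lambda>t. (X t, K t)) [0..<N]"

text \<open>The two partial walks after t segments; proj_walks C is run a_1 b_1 N. Allowing either
  order of the starting indices makes the two walks interchangeable (run_swap).\<close>
definition run :: "nat \<Rightarrow> nat \<Rightarrow> nat \<Rightarrow> walk \<times> walk" where
  "run u v t = foldl proj_step ((u, [], u), (v, [], v)) (take t (segments C))"

definition initial_ends :: "nat \<Rightarrow> nat \<Rightarrow> bool" where
  "initial_ends u v \<longleftrightarrow> u \<noteq> v \<and> {u, v} = {fst (S 0), snd (S 0)}"

lemma length_pos: "N > 0"
  using cycle by (auto simp: dsr2_cycle_def is_dsr_cycle_def)

lemma segment_index:
  assumes "t < N"
  shows "fst (S t) < snd (S t)" "L t < n" "L t \<in> {fst (S t), snd (S t)}"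
    "L t \<in> {fst (S ((t + 1) mod N)), snd (S ((t + 1) mod N))}"
proof -
  have H: "(case S t of (i, j) \<Rightarrow> i < j \<and> j < n) \<and> (case snd (C ! t) of (k, l) \<Rightarrow> l < n) \<and>
      LunderB B (snd (C ! t)) (S t) \<noteq> 0 \<and> LbarA A (S ((t + 1) mod N)) (snd (C ! t)) \<noteq> 0"
    using cycle assms by (auto simp: dsr2_cycle_def is_dsr_cycle_def S_def)
  obtain i j where "S t = (i, j)" by fastforce
  moreover obtain k l where "snd (C ! t) = (k, l)" by fastforce
  moreover obtain i' j' where "S ((t + 1) mod N) = (i', j')" by fastforce
  ultimately show "fst (S t) < snd (S t)" "L t < n" "L t \<in> {fst (S t), snd (S t)}"
    "L t \<in> {fst (S ((t + 1) mod N)), snd (S ((t + 1) mod N))}"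
    using H by (auto simp: LunderB_def LbarA_def L_def split: if_splits)
qed

lemma X_neq_L: "t < N \<Longrightarrow> X t \<noteq> L t"
  and X_L_pair: "t < N \<Longrightarrow> {X t, L t} = {fst (S t), snd (S t)}"
  unfolding X_def using other_neq_and_pair segment_index(1,3) by blast+

lemma Y_neq_L: "t < N \<Longrightarrow> Y t \<noteq> L t"
  and Y_L_pair: "t < N \<Longrightarrow> {Y t, L t} = {fst (S ((t + 1) mod N)), snd (S ((t + 1) mod N))}"
  unfolding Y_def using other_neq_and_pair segment_index(1,4) length_pos
  by (metis mod_less_divisor)+

lemma segments_nth: "t < N \<Longrightarrow> segments C ! t = (S t, (K t, L t), S ((t + 1) mod N))"
  by (simp add: segments_def S_def K_def L_def)

lemma length_segments: "length (segments C) = N"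
  by (simp add: segments_def)

lemma run_0: "run u v 0 = ((u, [], u), (v, [], v))"
  by (simp add: run_def)

lemma run_Suc: "t < N \<Longrightarrow> run u v (Suc t) =
   (if wend (fst (run u v t)) = X t
    then (wappend (fst (run u v t)) (X t) (K t) (Y t), snd (run u v t))
    else (fst (run u v t), wappend (snd (run u v t)) (X t) (K t) (Y t)))"
  by (simp add: run_def take_Suc_conv_app_nth length_segments segments_nth proj_step_def
      X_def Y_def Let_def)

lemma proj_walks_eq_run: "proj_walks C = run (fst (S 0)) (snd (S 0)) N"
proof -
  have "fst (hd C) = S 0" using length_pos by (simp add: hd_conv_nth S_def)
  then show ?thesis by (simp add: proj_walks_def run_def length_segments Let_def)
qed

lemma initial_ends_first: "initial_ends (fst (S 0)) (snd (S 0))"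
  using segment_index(1)[OF length_pos] by (simp add: initial_ends_def)

lemma run_ends:
  assumes "initial_ends u v" "t \<le> N"
  shows "wend (fst (run u v t)) \<noteq> wend (snd (run u v t)) \<and>
    {wend (fst (run u v t)), wend (snd (run u v t))} = {fst (S (t mod N)), snd (S (t mod N))}"
  using assms(2)
proof (induction t)
  case 0
  then show ?case using assms(1) by (simp add: run_0 initial_ends_def)
next
  case (Suc t)
  then have t: "t < N" by simp
  then have "wend (fst (run u v t)) \<noteq> wend (snd (run u v t))"
    "{wend (fst (run u v t)), wend (snd (run u v t))} = {X t, L t}"
    using Suc X_L_pair by auto
  then show ?case using Y_neq_L[OF t] Y_L_pair[OF t] X_neq_L[OF t]
    unfolding run_Suc[OF t] by (auto simp: doubleton_eq_iff mod_Suc_eq)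
qed

lemma run_starts: "t \<le> N \<Longrightarrow> wstart (fst (run u v t)) = u \<and> wstart (snd (run u v t)) = v"
  by (induction t) (auto simp: run_0 run_Suc)

lemma run_visited:
  "t \<le> N \<Longrightarrow>
    set (map fst (wsteps (fst (run u v t)))) \<union> set (map fst (wsteps (snd (run u v t)))) = X ` {..<t}"
  by (induction t) (auto simp: run_0 run_Suc lessThan_Suc)

text \<open>Since the two walks end at distinct indices, the segment extends the walk ending at X t
  whichever of the two is tested first.\<close>
lemma run_swap:
  assumes "initial_ends u v" "t \<le> N"
  shows "run v u t = prod.swap (run u v t)"
  using assms(2)
proof (induction t)
  case 0
  then show ?case by (simp add: run_0)
next
  case (Suc t)
  then have t: "t < N" by simp
  have "wend (fst (run u v t)) \<noteq> wend (snd (run u v t))"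
    "{wend (fst (run u v t)), wend (snd (run u v t))} = {X t, L t}"
    using run_ends[OF assms(1)] t X_L_pair by auto
  then show ?case using Suc X_neq_L[OF t] by (auto simp: run_Suc[OF t] doubleton_eq_iff)
qed

lemma run_constant_index:
  "t \<le> N \<Longrightarrow> \<forall>t' < t. L t' = u \<Longrightarrow>
    fst (run u v t) = (u, [], u) \<and> wsteps (snd (run u v t)) = map (\<lambda>t. (X t, K t)) [0..<t]"
proof (induction t)
  case 0
  then show ?case by (simp add: run_0)
next
  case (Suc t)
  then have t: "t < N" and "L t = u" and IH: "fst (run u v t) = (u, [], u)"
      "wsteps (snd (run u v t)) = map (\<lambda>t. (X t, K t)) [0..<t]"
    by auto
  then have "wend (fst (run u v t)) \<noteq> X t" using X_neq_L[OF t] by simp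
  then show ?case using IH by (simp add: run_Suc[OF t])
qed

lemma constant_index_if_run_idle:
  assumes "initial_ends u v" "t \<le> N" "wsteps (fst (run u v t)) = []"
  shows "\<forall>t' < t. L t' = u"
  using assms(2,3)
proof (induction t)
  case 0
  then show ?case by simp
next
  case (Suc t)
  then have t: "t < N" by simp
  have idle: "wend (fst (run u v t)) \<noteq> X t" "wsteps (fst (run u v t)) = []"
    using Suc.prems(2) by (auto simp: run_Suc[OF t] split: if_splits)
  then have IH: "\<forall>t' < t. L t' = u" using Suc by simp
  then have "wend (fst (run u v t)) = u" using run_constant_index t by simp
  moreover have "wend (fst (run u v t)) \<in> {X t, L t}"
    using run_ends[OF assms(1), of t] t X_L_pair[OF t] by auto
  ultimately have "L t = u" using idle by auto
  then show ?case using IH less_Suc_eq by auto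
qed

lemma run_of_constant_index:
  assumes "initial_ends u v" "\<forall>t < N. L t = u"
  shows "run u v N = ((u, [], u), (v, proj_steps, v))"
proof -
  have first: "fst (run u v N) = (u, [], u)" and "wsteps (snd (run u v N)) = proj_steps"
    using run_constant_index assms(2) by (auto simp: proj_steps_def)
  moreover have "wend (snd (run u v N)) = v"
    using run_ends[OF assms(1) order_refl] first assms(1)
    by (auto simp: initial_ends_def doubleton_eq_iff)
  moreover have "wstart (snd (run u v N)) = v" using run_starts by simp
  ultimately show ?thesis by (cases "snd (run u v N)") (simp add: prod_eq_iff)
qed

lemma proj_walks_cases:
  assumes "initial_ends u v"
  shows "proj_walks C = run u v N \<or> proj_walks C = prod.swap (run u v N)"
  using assms run_swap[OF assms] initial_ends_first
  unfolding proj_walks_eq_run initial_ends_def by (auto simp: doubleton_eq_iff)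

lemma constant_index_initial_ends:
  assumes "\<forall>t < N. L t = u"
  obtains v where "initial_ends u v"
proof -
  have "u \<in> {fst (S 0), snd (S 0)}" using segment_index(3) assms length_pos by auto
  then consider "initial_ends u (snd (S 0))" | "initial_ends u (fst (S 0))"
    using initial_ends_first by (auto simp: initial_ends_def insert_commute)
  then show thesis using that by cases
qed

lemma direct_if_constant_index:
  assumes "\<forall>t < N. L t = u"
  shows "is_direct C"
proof -
  obtain v where uv: "initial_ends u v" using constant_index_initial_ends[OF assms] .
  show ?thesis using proj_walks_cases[OF uv] run_of_constant_index[OF uv assms]
    by (auto simp: is_direct_def wclosed_def)
qed

lemma external_lifting_iff_constant_index:
  "external_lifting C W \<longleftrightarrow> (\<exists>u. (\<forall>t < N. L t = u) \<and> same_cycle proj_steps W)"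
proof
  assume ext: "external_lifting C W"
  obtain u v where uv: "initial_ends u v" "proj_walks C = run u v N"
    using initial_ends_first proj_walks_eq_run by blast
  have vu: "initial_ends v u" using uv(1) by (auto simp: initial_ends_def)
  have "proj_walks C = prod.swap (run v u N)" using run_swap[OF vu] uv(2) by simp
  then consider
      "wsteps (fst (run u v N)) = []" "same_cycle (wsteps (snd (run u v N))) W"
    | "wsteps (fst (run v u N)) = []" "same_cycle (wsteps (snd (run v u N))) W"
    using ext uv(2) by (auto simp: external_lifting_def)
  then show "\<exists>u. (\<forall>t < N. L t = u) \<and> same_cycle proj_steps W"
  proof cases
    case 1
    then have "\<forall>t < N. L t = u" using constant_index_if_run_idle[OF uv(1) order_refl] by simp
    then show ?thesis using 1 run_of_constant_index[OF uv(1)] by auto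
  next
    case 2
    then have "\<forall>t < N. L t = v" using constant_index_if_run_idle[OF vu order_refl] by simp
    then show ?thesis using 2 run_of_constant_index[OF vu] by auto
  qed
next
  assume "\<exists>u. (\<forall>t < N. L t = u) \<and> same_cycle proj_steps W"
  then obtain u v where "\<forall>t < N. L t = u" "same_cycle proj_steps W" "initial_ends u v"
    using constant_index_initial_ends by blast
  then show "external_lifting C W"
    using proj_walks_cases run_of_constant_index direct_if_constant_index
    by (fastforce simp: external_lifting_def)
qed

lemma C_eq_lift_if_constant_index:
  assumes "\<forall>t < N. L t = p"
  shows "C = map (\<lambda>(i, j). (spair i p, (j, p))) proj_steps"
proof (rule nth_equalityI)
  fix t assume "t < length C"
  then have t: "t < N" by simp
  have "S t = spair (X t) p"
    using segment_index(1,3)[OF t] assms t unfolding X_def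
    by (cases "S t") (auto simp: spair_def other_def)
  moreover have "C ! t = (S t, (K t, L t))" by (simp add: S_def K_def L_def)
  ultimately show "C ! t = map (\<lambda>(i, j). (spair i p, (j, p))) proj_steps ! t"
    using t assms by (simp add: proj_steps_def)
qed (simp add: proj_steps_def)

lemma constant_index_if_C_eq_lift:
  assumes C: "C = map (\<lambda>(i, j). (spair i p, (j, p))) V" and p: "p \<notin> set (map fst V)"
  shows "(\<forall>t < N. L t = p) \<and> proj_steps = V"
proof -
  have "L t = p \<and> (X t, K t) = V ! t" if t: "t < N" for t
  proof -
    obtain i j where ij: "V ! t = (i, j)" by fastforce
    have "i \<noteq> p" using p ij nth_mem[of t V] t C by (force simp: image_iff)
    moreover have "C ! t = (spair i p, (j, p))" using C t ij by simp
    ultimately show ?thesis using ij other_spair by (simp add: X_def S_def K_def L_def)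
  qed
  moreover have "length V = N" using C by simp
  ultimately show ?thesis by (auto simp: proj_steps_def intro: nth_equalityI)
qed

lemma external_lifting_iff_lift:
  "external_lifting C W \<longleftrightarrow>
    (\<exists>p < n. p \<notin> set (map fst W) \<and> same_cycle C (map (\<lambda>(i, j). (spair i p, (j, p))) W))"
  (is "_ \<longleftrightarrow> (\<exists>p < n. p \<notin> set (map fst W) \<and> same_cycle C (map (?lift p) W))")
proof -
  have "(\<forall>t < N. L t = p) \<and> same_cycle proj_steps W \<longleftrightarrow>
      p < n \<and> p \<notin> set (map fst W) \<and> same_cycle C (map (?lift p) W)" for p
  proof
    assume const: "(\<forall>t < N. L t = p) \<and> same_cycle proj_steps W"
    then obtain r where r: "proj_steps = rotate r W" by (auto simp: same_cycle_def)
    have "set (map fst W) = set (map fst proj_steps)" by (simp add: r rotate_map)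
    also have "\<dots> = X ` {..<N}" by (auto simp: proj_steps_def)
    finally have "set (map fst W) = X ` {..<N}" .
    then have "p \<notin> set (map fst W)" using const X_neq_L by auto
    moreover have "p < n" using const segment_index(2) length_pos by auto
    moreover have "C = rotate r (map (?lift p) W)"
      using C_eq_lift_if_constant_index const r by (simp add: rotate_map)
    ultimately show "p < n \<and> p \<notin> set (map fst W) \<and> same_cycle C (map (?lift p) W)"
      by (auto simp: same_cycle_def)
  next
    assume "p < n \<and> p \<notin> set (map fst W) \<and> same_cycle C (map (?lift p) W)"
    then obtain r where "p \<notin> set (map fst (rotate r W))" "C = map (?lift p) (rotate r W)"
      by (auto simp: same_cycle_def rotate_map)
    then show "(\<forall>t < N. L t = p) \<and> same_cycle proj_steps W"
      using constant_index_if_C_eq_lift by (auto simp: same_cycle_def)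
  qed
  then show ?thesis using external_lifting_iff_constant_index by blast
qed

lemma index_constant_if_never_moving:
  assumes t: "t < N" and L: "L t \<notin> X ` {..<N}"
  shows "\<forall>u < N. L u = L t"
proof -
  have step: "L ((t + d) mod N) = L t" for d
  proof (induction d)
    case 0
    then show ?case using t by simp
  next
    case (Suc d)
    define u where "u = (t + d) mod N"
    have u: "u < N" and next_u: "(u + 1) mod N < N" using length_pos by (simp_all add: u_def)
    have "L u \<in> {X ((u + 1) mod N), L ((u + 1) mod N)}"
      using segment_index(4)[OF u] X_L_pair[OF next_u] by auto
    moreover have "L u \<noteq> X ((u + 1) mod N)" using Suc L next_u u_def by auto
    ultimately show ?case using Suc by (auto simp: u_def mod_Suc_eq)
  qed
  show ?thesis
  proof (intro allI impI)
    fix u assume "u < N"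
    then have "(t + (N - t + u)) mod N = u" using t by simp
    then show "L u = L t" using step by metis
  qed
qed

lemma internal_lifting_vertices:
  assumes "internal_lifting C W" "s \<in> set (map fst C)"
  shows "fst s \<in> set (map fst W) \<and> snd s \<in> set (map fst W)"
proof -
  obtain r where r: "wsteps (fst (proj_walks C)) @ wsteps (snd (proj_walks C)) = rotate r W"
    and twisted: "\<not> is_direct C"
    using assms(1) by (auto simp: internal_lifting_def same_cycle_def)
  have visited: "set (map fst W) = X ` {..<N}"
    using run_visited[of N] arg_cong[OF r, of "set \<circ> map fst"]
    by (simp add: proj_walks_eq_run rotate_map[symmetric])
  obtain t where t: "t < N" and s: "s = S t" using assms(2) by (auto simp: in_set_conv_nth S_def)
  have "L t \<in> X ` {..<N}"
    using index_constant_if_never_moving[OF t] direct_if_constant_index twisted by blast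
  then have "{fst s, snd s} \<subseteq> X ` {..<N}" using X_L_pair[OF t] t s by auto
  then show ?thesis using visited by auto
qed

end

theorem proposition5p5:
  fixes n m :: nat and A B :: "nat \<Rightarrow> nat \<Rightarrow> real" and W :: "(nat \<times> nat) list"
  assumes "n \<ge> 2"
    and "dsr_cycle n m A B W"
  shows "(\<forall>C. dsr2_cycle n m A B C \<longrightarrow>
            (external_lifting C W \<longleftrightarrow>
              (\<exists>p < n. p \<notin> set (map fst W) \<and>
                 same_cycle C (map (\<lambda>(i, j). (spair i p, (j, p))) W))))
       \<and> (\<forall>C. dsr2_cycle n m A B C \<and> internal_lifting C W \<longrightarrow>
            (\<forall>s \<in> set (map fst C). fst s \<in> set (map fst W) \<and> snd s \<in> set (map fst W)))"
proof (rule conjI; intro allI impI ballI)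
  fix C
  assume "dsr2_cycle n m A B C"
  then interpret dsr2_cycle_segments n m A B C by unfold_locales
  show "external_lifting C W \<longleftrightarrow> (\<exists>p < n. p \<notin> set (map fst W) \<and>
      same_cycle C (map (\<lambda>(i, j). (spair i p, (j, p))) W))"
    by (rule external_lifting_iff_lift)
next
  fix C s
  assume C: "dsr2_cycle n m A B C \<and> internal_lifting C W" and s: "s \<in> set (map fst C)"
  then interpret dsr2_cycle_segments n m A B C by unfold_locales simp
  show "fst s \<in> set (map fst W) \<and> snd s \<in> set (map fst W)"
    using internal_lifting_vertices C s by simp
qed

end
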